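(* Let $G$ be a group with finite symmetric generating set $S$ and Laplacian $\Delta$, let $R\ge1$, and let $x\in IG$ with $x^*=x$. Suppose $b\in\mathbb{R}G$ is supported in $B_{2R}$ and $x-b\in\Sigma^2_R IG$. Then for every $\varepsilon\ge 2^{2\lceil\log_2R\rceil}\|b\|_1$ we have $x+\varepsilon\Delta\in\Sigma^2_R IG$.
   Context: For a group $G$ with finite symmetric generating set $S$: $*$ is the linear involution of $\mathbb{R}G$ induced by $g\mapsto g^{-1}$; $IG$ is the augmentation ideal (kernel of $\sum_g c_gg\mapsto\sum_g c_g$); the Laplacian is $\Delta=|S|-\sum_{s\in S}s$; $B_R$ is the ball of radius $R$ about $1$ in the word metric; $\Sigma^2_R\mathbb{R}G$ is the set of finite sums $\sum_i\xi_i^*\xi_i$ with each $\xi_i$ supported in $B_R$, and $\Sigma^2_R IG=IG\cap\Sigma^2_R\mathbb{R}G$. For $b=\sum_g b_gg$, $\|b\|_1=\sum_g|b_g|$. *)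

theory Defs
  imports "HOL-Algebra.Algebra" Complex_Main
begin

definition supp :: "('a \<Rightarrow> real) \<Rightarrow> 'a set" where
  "supp a = {g. a g \<noteq> 0}"

definition grp_ring :: "('a, 'b) monoid_scheme \<Rightarrow> ('a \<Rightarrow> real) set" where
  "grp_ring G = {a. finite (supp a) \<and> supp a \<subseteq> carrier G}"

definition conv :: "('a, 'b) monoid_scheme \<Rightarrow> ('a \<Rightarrow> real) \<Rightarrow> ('a \<Rightarrow> real) \<Rightarrow> 'a \<Rightarrow> real" where
  "conv G a b = (\<lambda>g. if g \<in> carrier G then (\<Sum>h\<in>supp a. a h * b (inv\<^bsub>G\<^esub> h \<otimes>\<^bsub>G\<^esub> g)) else 0)"

definition star :: "('a, 'b) monoid_scheme \<Rightarrow> ('a \<Rightarrow> real) \<Rightarrow> 'a \<Rightarrow> real" where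
  "star G a = (\<lambda>g. if g \<in> carrier G then a (inv\<^bsub>G\<^esub> g) else 0)"

definition augmentation :: "('a \<Rightarrow> real) \<Rightarrow> real" where
  "augmentation a = (\<Sum>g\<in>supp a. a g)"

definition aug_ideal :: "('a, 'b) monoid_scheme \<Rightarrow> ('a \<Rightarrow> real) set" where
  "aug_ideal G = {a \<in> grp_ring G. augmentation a = 0}"

definition laplacian :: "('a, 'b) monoid_scheme \<Rightarrow> 'a set \<Rightarrow> 'a \<Rightarrow> real" where
  "laplacian G S = (\<lambda>g. (if g = \<one>\<^bsub>G\<^esub> then real (card S) else 0) - (if g \<in> S then 1 else 0))"

definition word_ball :: "('a, 'b) monoid_scheme \<Rightarrow> 'a set \<Rightarrow> nat \<Rightarrow> 'a set" where
  "word_ball G S R = {foldr (\<otimes>\<^bsub>G\<^esub>) xs \<one>\<^bsub>G\<^esub> | xs. set xs \<subseteq> S \<and> length xs \<le> R}"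

definition sos_R :: "('a, 'b) monoid_scheme \<Rightarrow> 'a set \<Rightarrow> nat \<Rightarrow> ('a \<Rightarrow> real) set" where
  "sos_R G S R = {x. \<exists>(n::nat) (\<xi>::nat \<Rightarrow> 'a \<Rightarrow> real).
      (\<forall>i<n. \<xi> i \<in> grp_ring G \<and> supp (\<xi> i) \<subseteq> word_ball G S R) \<and>
      x = (\<lambda>g. \<Sum>i<n. conv G (star G (\<xi> i)) (\<xi> i) g)}"

definition sos_R_IG :: "('a, 'b) monoid_scheme \<Rightarrow> 'a set \<Rightarrow> nat \<Rightarrow> ('a \<Rightarrow> real) set" where
  "sos_R_IG G S R = aug_ideal G \<inter> sos_R G S R"

definition norm1 :: "('a \<Rightarrow> real) \<Rightarrow> real" where
  "norm1 b = (\<Sum>g\<in>supp b. \<bar>b g\<bar>)"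

end

theory Submission
  imports Defs
begin

text \<open>Put Q(g) = 2 - g - g\<inverse> = (1 - g)^*(1 - g), so that \<Delta> = 1/2 \<Sum>{Q(s) | s \<in> S}.
  Being symmetric with augmentation zero, b equals \<Sum>{-b(g)/2 Q(g) | g \<noteq> 1}. The terms with
  b(g) < 0 are hermitian squares: writing g = hk with h, k \<in> B(R) gives Q(g) = (h - k)^*(h - k).
  The others are absorbed by \<epsilon>\<Delta>, because 4^(k+1) \<Delta> - Q(g) is a sum of squares over B(R)
  whenever R \<le> 2^k and g \<in> B(2R): halving a word w for g repeatedly and using
  2Q(h) + 2Q(k) - Q(hk) = (h\<inverse> - 2 + k)^*(h\<inverse> - 2 + k) shows that 2^(k+1) \<Sum>{Q(s) | s \<in> w} - Q(g)
  is a sum of squares over B(R), and after pairing s with s\<inverse> each generator occurs at most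
  2^k times in a shortest such w.\<close>

section \<open>The cone of sums of squares\<close>

lemma sos_R_zero: "(\<lambda>y. 0) \<in> sos_R G S R"
  unfolding sos_R_def by (rule CollectI, rule exI[of _ 0]) auto

lemma sos_R_square:
  assumes "\<xi> \<in> grp_ring G" "supp \<xi> \<subseteq> word_ball G S R"
  shows "conv G (star G \<xi>) \<xi> \<in> sos_R G S R"
  unfolding sos_R_def
  by (rule CollectI, rule exI[of _ 1], rule exI[of _ "\<lambda>_. \<xi>"]) (use assms in auto)

lemma sos_R_add:
  fixes G :: "('a, 'b) monoid_scheme"
  assumes "a \<in> sos_R G S R" "c \<in> sos_R G S R"
  shows "(\<lambda>y. a y + c y) \<in> sos_R G S R"
proof -
  obtain n1 and \<xi>1 :: "nat \<Rightarrow> 'a \<Rightarrow> real"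
    where h1: "\<forall>i<n1. \<xi>1 i \<in> grp_ring G \<and> supp (\<xi>1 i) \<subseteq> word_ball G S R"
      "a = (\<lambda>g. \<Sum>i<n1. conv G (star G (\<xi>1 i)) (\<xi>1 i) g)"
    using assms(1) unfolding sos_R_def by blast
  obtain n2 and \<xi>2 :: "nat \<Rightarrow> 'a \<Rightarrow> real"
    where h2: "\<forall>i<n2. \<xi>2 i \<in> grp_ring G \<and> supp (\<xi>2 i) \<subseteq> word_ball G S R"
      "c = (\<lambda>g. \<Sum>i<n2. conv G (star G (\<xi>2 i)) (\<xi>2 i) g)"
    using assms(2) unfolding sos_R_def by blast
  define \<xi> where "\<xi> i = (if i < n1 then \<xi>1 i else \<xi>2 (i - n1))" for i
  have "\<forall>i<n1+n2. \<xi> i \<in> grp_ring G \<and> supp (\<xi> i) \<subseteq> word_ball G S R"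
    using h1(1) h2(1) unfolding \<xi>_def by auto
  moreover have "(\<lambda>y. a y + c y) = (\<lambda>g. \<Sum>i<n1+n2. conv G (star G (\<xi> i)) (\<xi> i) g)"
  proof
    fix g
    let ?f = "\<lambda>i. conv G (star G (\<xi> i)) (\<xi> i) g"
    have "(\<Sum>i<n1+n2. ?f i) = (\<Sum>i\<in>{0..<n1}. ?f i) + (\<Sum>i\<in>{n1..<n1+n2}. ?f i)"
      by (simp add: lessThan_atLeast0 sum.atLeastLessThan_concat)
    also have "(\<Sum>i\<in>{n1..<n1+n2}. ?f i) = (\<Sum>i\<in>{0..<n2}. ?f (i + n1))"
      using sum.shift_bounds_nat_ivl[of ?f 0 n1 n2] by (simp add: add.commute)
    finally show "a g + c g = (\<Sum>i<n1+n2. ?f i)"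
      unfolding h1(2) h2(2) \<xi>_def by (simp add: lessThan_atLeast0)
  qed
  ultimately show ?thesis unfolding sos_R_def by blast
qed

lemma conv_star_self_mult_const:
  "conv G (star G (\<lambda>y. c * \<xi> y)) (\<lambda>y. c * \<xi> y) g = c\<^sup>2 * conv G (star G \<xi>) \<xi> g"
proof (cases "c = 0")
  case True
  then show ?thesis by (simp add: conv_def supp_def)
next
  case False
  then have "supp (star G (\<lambda>y. c * \<xi> y)) = supp (star G \<xi>)"
    by (auto simp: supp_def star_def)
  then show ?thesis
    by (auto simp: conv_def star_def sum_distrib_left power2_eq_square mult_ac intro!: sum.cong)
qed

lemma sos_R_scale:
  fixes G :: "('a, 'b) monoid_scheme"
  assumes "a \<in> sos_R G S R" "0 \<le> r"
  shows "(\<lambda>y. r * a y) \<in> sos_R G S R"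
proof -
  obtain n and \<xi> :: "nat \<Rightarrow> 'a \<Rightarrow> real"
    where h: "\<forall>i<n. \<xi> i \<in> grp_ring G \<and> supp (\<xi> i) \<subseteq> word_ball G S R"
      "a = (\<lambda>g. \<Sum>i<n. conv G (star G (\<xi> i)) (\<xi> i) g)"
    using assms(1) unfolding sos_R_def by blast
  define \<eta> where "\<eta> i = (\<lambda>y. sqrt r * \<xi> i y)" for i
  have "supp (\<eta> i) \<subseteq> supp (\<xi> i)" for i
    unfolding \<eta>_def supp_def by auto
  then have "\<forall>i<n. \<eta> i \<in> grp_ring G \<and> supp (\<eta> i) \<subseteq> word_ball G S R"
    using h(1) unfolding grp_ring_def by (metis (mono_tags, lifting) finite_subset mem_Collect_eq order_trans)
  moreover have "(\<lambda>y. r * a y) = (\<lambda>g. \<Sum>i<n. conv G (star G (\<eta> i)) (\<eta> i) g)"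
    unfolding h(2) \<eta>_def conv_star_self_mult_const using assms(2) by (simp add: sum_distrib_left)
  ultimately show ?thesis unfolding sos_R_def by blast
qed

lemma sos_R_sum:
  assumes "finite I" "\<And>i. i \<in> I \<Longrightarrow> f i \<in> sos_R G S R"
  shows "(\<lambda>y. \<Sum>i\<in>I. f i y) \<in> sos_R G S R"
  using assms
proof (induction I rule: finite_induct)
  case empty
  then show ?case using sos_R_zero by simp
next
  case (insert j I)
  then have "(\<lambda>y. f j y + (\<Sum>i\<in>I. f i y)) \<in> sos_R G S R"
    by (intro sos_R_add) auto
  then show ?case using insert by simp
qed

definition dirac :: "'a \<Rightarrow> 'a \<Rightarrow> real" where
  "dirac t y = (if y = t then 1 else 0)"

definition point_comb :: "nat \<Rightarrow> (nat \<Rightarrow> real) \<Rightarrow> (nat \<Rightarrow> 'a) \<Rightarrow> 'a \<Rightarrow> real" where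
  "point_comb m c u = (\<lambda>y. \<Sum>i<m. c i * dirac (u i) y)"

lemma conv_outside_carrier: "g \<notin> carrier G \<Longrightarrow> conv G a c g = 0"
  unfolding conv_def by simp

lemma supp_point_comb: "supp (point_comb m c u) \<subseteq> u ` {..<m}"
proof
  fix x assume "x \<in> supp (point_comb m c u)"
  then have "\<exists>i<m. x = u i"
    unfolding supp_def point_comb_def dirac_def by (auto intro: ccontr)
  then show "x \<in> u ` {..<m}" by blast
qed

context group begin

lemma point_comb_in_grp_ring: "u ` {..<m} \<subseteq> carrier G \<Longrightarrow> point_comb m c u \<in> grp_ring G"
  unfolding grp_ring_def using supp_point_comb[of m c u] by (auto intro: finite_subset)

lemma sum_inv_reindex:
  assumes "\<And>g. g \<in> A \<Longrightarrow> inv g \<in> A" "A \<subseteq> carrier G"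
  shows "(\<Sum>g\<in>A. f (inv g)) = (\<Sum>g\<in>A. f g)"
proof -
  have "A \<subseteq> (\<lambda>g. inv g) ` A"
  proof
    fix g assume "g \<in> A"
    then have "inv g \<in> A" "g = inv (inv g)" using assms by auto
    then show "g \<in> (\<lambda>g. inv g) ` A" by blast
  qed
  then have "(\<lambda>g. inv g) ` A = A" using assms(1) by blast
  moreover have "inj_on (\<lambda>g. inv g) A"
    using assms(2) inv_inj by (rule inj_on_subset[rotated])
  ultimately show ?thesis using sum.reindex[of "\<lambda>g. inv g" A f] by simp
qed

lemma supp_star: "\<xi> \<in> grp_ring G \<Longrightarrow> supp (star G \<xi>) = (\<lambda>h. inv h) ` supp \<xi>"
  unfolding grp_ring_def supp_def star_def by (force simp: image_iff)

lemma conv_star_self_eq_sum: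
  assumes "\<xi> \<in> grp_ring G" "finite F" "supp \<xi> \<subseteq> F" "F \<subseteq> carrier G" "g \<in> carrier G"
  shows "conv G (star G \<xi>) \<xi> g = (\<Sum>x\<in>F. \<xi> x * \<xi> (x \<otimes> g))"
proof -
  have sc: "supp \<xi> \<subseteq> carrier G" using assms(1) unfolding grp_ring_def by auto
  have inj: "inj_on (\<lambda>h. inv h) (supp \<xi>)"
    using sc inv_inj by (rule inj_on_subset[rotated])
  have "conv G (star G \<xi>) \<xi> g = (\<Sum>h\<in>(\<lambda>h. inv h) ` supp \<xi>. star G \<xi> h * \<xi> (inv h \<otimes> g))"
    unfolding conv_def using assms(5) supp_star[OF assms(1)] by simp
  also have "\<dots> = (\<Sum>x\<in>supp \<xi>. star G \<xi> (inv x) * \<xi> (inv (inv x) \<otimes> g))"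
    by (rule sum.reindex[OF inj, unfolded comp_def])
  also have "\<dots> = (\<Sum>x\<in>supp \<xi>. \<xi> x * \<xi> (x \<otimes> g))"
    using sc by (intro sum.cong refl) (auto simp: star_def)
  also have "\<dots> = (\<Sum>x\<in>F. \<xi> x * \<xi> (x \<otimes> g))"
    using assms(2,3) by (intro sum.mono_neutral_left) (auto simp: supp_def)
  finally show ?thesis .
qed

lemma conv_star_self_point_comb:
  assumes "u ` {..<m} \<subseteq> carrier G" "g \<in> carrier G"
  shows "conv G (star G (point_comb m c u)) (point_comb m c u) g =
     (\<Sum>i<m. \<Sum>j<m. c i * c j * dirac (inv (u i) \<otimes> u j) g)"
proof -
  let ?F = "u ` {..<m}"
  have "conv G (star G (point_comb m c u)) (point_comb m c u) g
      = (\<Sum>x\<in>?F. point_comb m c u x * point_comb m c u (x \<otimes> g))"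
    by (rule conv_star_self_eq_sum[OF point_comb_in_grp_ring[OF assms(1)] _ supp_point_comb assms])
      simp
  also have "\<dots> = (\<Sum>i<m. \<Sum>j<m. \<Sum>x\<in>?F. c i * c j * (dirac (u i) x * dirac (u j) (x \<otimes> g)))"
    unfolding point_comb_def sum_product
    by (subst sum.swap, rule sum.cong[OF refl], subst sum.swap) (simp add: mult_ac)
  also have "\<dots> = (\<Sum>i<m. \<Sum>j<m. c i * c j * dirac (inv (u i) \<otimes> u j) g)"
  proof (intro sum.cong refl)
    fix i j assume i: "i \<in> {..<m}" and j: "j \<in> {..<m}"
    have "(u i \<otimes> g = u j) = (g = inv (u i) \<otimes> u j)"
      using inv_solve_left'[of g "u i" "u j"] assms i j by (metis image_subset_iff)
    then have "(\<Sum>x\<in>?F. c i * c j * (dirac (u i) x * dirac (u j) (x \<otimes> g)))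
        = (\<Sum>x\<in>?F. if x = u i then c i * c j * dirac (inv (u i) \<otimes> u j) g else 0)"
      by (intro sum.cong refl) (auto simp: dirac_def)
    also have "\<dots> = c i * c j * dirac (inv (u i) \<otimes> u j) g"
      using i by (simp add: sum.delta)
    finally show "(\<Sum>x\<in>?F. c i * c j * (dirac (u i) x * dirac (u j) (x \<otimes> g)))
        = c i * c j * dirac (inv (u i) \<otimes> u j) g" .
  qed
  finally show ?thesis .
qed

lemma conv_star_self_inv:
  assumes "\<xi> \<in> grp_ring G" "g \<in> carrier G"
  shows "conv G (star G \<xi>) \<xi> (inv g) = conv G (star G \<xi>) \<xi> g"
proof -
  have sc: "supp \<xi> \<subseteq> carrier G" and fin: "finite (supp \<xi>)"
    using assms(1) unfolding grp_ring_def by auto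
  let ?F = "supp \<xi> \<union> (\<lambda>y. y \<otimes> g) ` supp \<xi>"
  let ?F' = "(\<lambda>x. x \<otimes> inv g) ` ?F"
  have Fc: "?F \<subseteq> carrier G" using sc assms(2) by auto
  have "supp \<xi> \<subseteq> ?F'"
  proof
    fix y assume "y \<in> supp \<xi>"
    then have "y \<otimes> g \<in> ?F" "y = (y \<otimes> g) \<otimes> inv g" using sc assms(2) by (auto simp: m_assoc)
    then show "y \<in> ?F'" by blast
  qed
  moreover have "inj_on (\<lambda>x. x \<otimes> inv g) ?F"
    using Fc assms(2) by (intro inj_onI) (metis inv_closed r_cancel subsetD)
  moreover have "?F' \<subseteq> carrier G" using Fc assms(2) by auto
  ultimately have "(\<Sum>x\<in>?F. \<xi> x * \<xi> (x \<otimes> inv g)) = (\<Sum>y\<in>?F'. \<xi> (y \<otimes> g) * \<xi> y)"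
    using Fc assms(2) by (subst sum.reindex) (auto intro!: sum.cong simp: m_assoc)
  moreover have "conv G (star G \<xi>) \<xi> (inv g) = (\<Sum>x\<in>?F. \<xi> x * \<xi> (x \<otimes> inv g))"
    using Fc fin assms by (intro conv_star_self_eq_sum) auto
  moreover have "conv G (star G \<xi>) \<xi> g = (\<Sum>y\<in>?F'. \<xi> (y \<otimes> g) * \<xi> y)"
    using \<open>supp \<xi> \<subseteq> ?F'\<close> \<open>?F' \<subseteq> carrier G\<close> fin assms
    by (subst conv_star_self_eq_sum[of _ ?F']) (auto simp: mult.commute)
  ultimately show ?thesis by simp
qed

end

section \<open>The elements Q(g) = 2 - g - g\<inverse>\<close>

definition dir_laplacian :: "('a, 'b) monoid_scheme \<Rightarrow> 'a \<Rightarrow> 'a \<Rightarrow> real" where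
  "dir_laplacian G g = (\<lambda>y. 2 * dirac \<one>\<^bsub>G\<^esub> y - dirac g y - dirac (inv\<^bsub>G\<^esub> g) y)"

context group begin

lemma dir_laplacian_inv: "t \<in> carrier G \<Longrightarrow> dir_laplacian G (inv t) = dir_laplacian G t"
  unfolding dir_laplacian_def by (auto simp: fun_eq_iff)

lemma dir_laplacian_one: "dir_laplacian G \<one> = (\<lambda>y. 0)"
  unfolding dir_laplacian_def by (auto simp: fun_eq_iff)

lemma dirac_outside: "y \<notin> carrier G \<Longrightarrow> t \<in> carrier G \<Longrightarrow> dirac t y = 0"
  unfolding dirac_def by auto

definition diff_pair :: "'a \<Rightarrow> 'a \<Rightarrow> 'a \<Rightarrow> real" where
  "diff_pair a b = point_comb 2 (\<lambda>i. if i = 0 then 1 else -1) (\<lambda>i. if i = 0 then a else b)"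

definition second_diff :: "'a \<Rightarrow> 'a \<Rightarrow> 'a \<Rightarrow> real" where
  "second_diff a b = point_comb 3 (\<lambda>i. if i = 1 then -2 else 1)
      (\<lambda>i. if i = 0 then a else if i = 1 then \<one> else b)"

lemma diff_pair_in_grp_ring: "a \<in> carrier G \<Longrightarrow> b \<in> carrier G \<Longrightarrow> diff_pair a b \<in> grp_ring G"
  unfolding diff_pair_def by (rule point_comb_in_grp_ring) (auto simp: numeral_eq_Suc lessThan_Suc)

lemma supp_diff_pair: "supp (diff_pair a b) \<subseteq> {a, b}"
  unfolding diff_pair_def using supp_point_comb[of 2 _ "\<lambda>i. if i = 0 then a else b"]
  by (auto simp: numeral_eq_Suc lessThan_Suc)

lemma second_diff_in_grp_ring: "a \<in> carrier G \<Longrightarrow> b \<in> carrier G \<Longrightarrow> second_diff a b \<in> grp_ring G"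
  unfolding second_diff_def by (rule point_comb_in_grp_ring) (auto simp: numeral_eq_Suc lessThan_Suc)

lemma supp_second_diff: "supp (second_diff a b) \<subseteq> {a, \<one>, b}"
  unfolding second_diff_def
  using supp_point_comb[of 3 _ "\<lambda>i. if i = 0 then a else if i = 1 then \<one> else b"]
  by (auto simp: numeral_eq_Suc lessThan_Suc)

lemma conv_star_self_diff_pair:
  assumes "a \<in> carrier G" "b \<in> carrier G"
  shows "conv G (star G (diff_pair a b)) (diff_pair a b) = dir_laplacian G (inv a \<otimes> b)"
proof
  fix y show "conv G (star G (diff_pair a b)) (diff_pair a b) y = dir_laplacian G (inv a \<otimes> b) y"
  proof (cases "y \<in> carrier G")
    case True
    then show ?thesis
      unfolding diff_pair_def dir_laplacian_def
      using assms by (subst conv_star_self_point_comb)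
        (auto simp: numeral_eq_Suc lessThan_Suc inv_mult_group)
  qed (use assms in \<open>simp add: conv_outside_carrier dirac_outside dir_laplacian_def\<close>)
qed

lemma conv_star_self_second_diff:
  assumes "a \<in> carrier G" "b \<in> carrier G"
  shows "conv G (star G (second_diff a b)) (second_diff a b) =
     (\<lambda>y. 2 * dir_laplacian G (inv a) y + 2 * dir_laplacian G b y - dir_laplacian G (inv a \<otimes> b) y)"
proof
  fix y show "conv G (star G (second_diff a b)) (second_diff a b) y =
    2 * dir_laplacian G (inv a) y + 2 * dir_laplacian G b y - dir_laplacian G (inv a \<otimes> b) y"
  proof (cases "y \<in> carrier G")
    case True
    then show ?thesis
      unfolding second_diff_def dir_laplacian_def
      using assms by (subst conv_star_self_point_comb)
        (auto simp: numeral_eq_Suc lessThan_Suc inv_mult_group)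
  qed (use assms in \<open>simp add: conv_outside_carrier dirac_outside dir_laplacian_def\<close>)
qed

end

context group begin

lemma foldr_mult_closed: "set xs \<subseteq> carrier G \<Longrightarrow> z \<in> carrier G \<Longrightarrow> foldr (\<otimes>) xs z \<in> carrier G"
  by (induction xs) auto

lemma foldr_mult_append:
  assumes "set xs \<subseteq> carrier G" "set ys \<subseteq> carrier G"
  shows "foldr (\<otimes>) (xs @ ys) \<one> = foldr (\<otimes>) xs \<one> \<otimes> foldr (\<otimes>) ys \<one>"
  using assms by (induction xs) (auto simp: m_assoc foldr_mult_closed)

lemma foldr_mult_rev_inv:
  "set xs \<subseteq> carrier G \<Longrightarrow> foldr (\<otimes>) (rev (map (\<lambda>z. inv z) xs)) \<one> = inv (foldr (\<otimes>) xs \<one>)"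
proof (induction xs)
  case (Cons x xs)
  then have x: "x \<in> carrier G" and xs: "set xs \<subseteq> carrier G" by auto
  have "foldr (\<otimes>) (rev (map (\<lambda>z. inv z) (x # xs))) \<one> = foldr (\<otimes>) (rev (map (\<lambda>z. inv z) xs)) \<one> \<otimes> inv x"
    using foldr_mult_append[of "rev (map (\<lambda>z. inv z) xs)" "[inv x]"] x xs by auto
  also have "\<dots> = inv (x \<otimes> foldr (\<otimes>) xs \<one>)"
    using Cons x xs by (simp add: inv_mult_group foldr_mult_closed)
  finally show ?case by simp
qed simp

end

locale symmetric_generators = group +
  fixes S :: "'a set"
  assumes finite_gens: "finite S" and gens_closed: "S \<subseteq> carrier G"
    and gens_inv_closed: "\<forall>s\<in>S. inv s \<in> S"
begin

lemma word_ball_iff: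
  "g \<in> word_ball G S n \<longleftrightarrow> (\<exists>xs. g = foldr (\<otimes>) xs \<one> \<and> set xs \<subseteq> S \<and> length xs \<le> n)"
  unfolding word_ball_def by (simp only: mem_Collect_eq)

lemma word_ball_carrier: "g \<in> word_ball G S n \<Longrightarrow> g \<in> carrier G"
  using gens_closed foldr_mult_closed unfolding word_ball_iff by blast

lemma one_in_word_ball: "\<one> \<in> word_ball G S n"
  unfolding word_ball_iff by (rule exI[of _ "[]"]) simp

lemma gen_in_word_ball: "t \<in> S \<Longrightarrow> n \<ge> 1 \<Longrightarrow> t \<in> word_ball G S n"
  unfolding word_ball_iff using gens_closed by (intro exI[of _ "[t]"]) auto

lemma inv_in_word_ball: "g \<in> word_ball G S n \<Longrightarrow> inv g \<in> word_ball G S n"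
proof -
  assume "g \<in> word_ball G S n"
  then obtain xs where xs: "g = foldr (\<otimes>) xs \<one>" "set xs \<subseteq> S" "length xs \<le> n"
    by (auto simp: word_ball_iff)
  then have "inv g = foldr (\<otimes>) (rev (map (\<lambda>z. inv z) xs)) \<one>"
    using gens_closed foldr_mult_rev_inv[of xs] by auto
  moreover have "set (rev (map (\<lambda>z. inv z) xs)) \<subseteq> S" using xs(2) gens_inv_closed by auto
  ultimately show ?thesis unfolding word_ball_iff using xs(3) by (intro exI) auto
qed

lemma word_ball_double_split:
  assumes "g \<in> word_ball G S (2 * R)"
  obtains h k where "h \<in> word_ball G S R" "k \<in> word_ball G S R" "g = h \<otimes> k"
proof -
  obtain xs where xs: "g = foldr (\<otimes>) xs \<one>" "set xs \<subseteq> S" "length xs \<le> 2 * R"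
    using assms by (auto simp: word_ball_iff)
  let ?h = "foldr (\<otimes>) (take R xs) \<one>" and ?k = "foldr (\<otimes>) (drop R xs) \<one>"
  have s: "set (take R xs) \<subseteq> S" "set (drop R xs) \<subseteq> S"
    using xs(2) by (auto dest: in_set_takeD in_set_dropD)
  have "g = ?h \<otimes> ?k"
    using xs(1) foldr_mult_append[of "take R xs" "drop R xs"] s gens_closed by auto
  moreover have "?h \<in> word_ball G S R" "?k \<in> word_ball G S R"
    unfolding word_ball_iff using s xs(3) by (auto intro!: exI)
  ultimately show ?thesis using that by blast
qed

lemma dir_laplacian_sos:
  assumes "g \<in> word_ball G S (2 * R)"
  shows "dir_laplacian G g \<in> sos_R G S R"
proof -
  obtain h k where hk: "h \<in> word_ball G S R" "k \<in> word_ball G S R" "g = h \<otimes> k"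
    using word_ball_double_split[OF assms] .
  then have c: "h \<in> carrier G" "k \<in> carrier G" using word_ball_carrier by auto
  have "conv G (star G (diff_pair (inv h) k)) (diff_pair (inv h) k) \<in> sos_R G S R"
    using diff_pair_in_grp_ring[of "inv h" k] supp_diff_pair[of "inv h" k]
      inv_in_word_ball[OF hk(1)] hk(2) c
    by (intro sos_R_square) auto
  then show ?thesis using conv_star_self_diff_pair[of "inv h" k] c hk(3) by simp
qed

lemma dir_laplacian_mult_defect_sos:
  assumes "h \<in> word_ball G S R" "k \<in> word_ball G S R"
  shows "(\<lambda>y. 2 * dir_laplacian G h y + 2 * dir_laplacian G k y - dir_laplacian G (h \<otimes> k) y)
    \<in> sos_R G S R"
proof -
  have c: "h \<in> carrier G" "k \<in> carrier G" using assms word_ball_carrier by auto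
  have "conv G (star G (second_diff (inv h) k)) (second_diff (inv h) k) \<in> sos_R G S R"
    using second_diff_in_grp_ring[of "inv h" k] supp_second_diff[of "inv h" k]
      inv_in_word_ball[OF assms(1)] assms(2) one_in_word_ball c
    by (intro sos_R_square) auto
  then show ?thesis using conv_star_self_second_diff[of "inv h" k] c by simp
qed

lemma sum_gens_inv: "(\<Sum>t\<in>S. f (inv t)) = (\<Sum>t\<in>S. f t)"
  using gens_inv_closed gens_closed by (intro sum_inv_reindex) auto

lemma laplacian_eq_half_sum: "laplacian G S y = (1/2) * (\<Sum>t\<in>S. dir_laplacian G t y)"
proof -
  have "(\<Sum>t\<in>S. dirac t y) = (if y \<in> S then 1 else 0)"
    unfolding dirac_def using finite_gens by (simp add: sum.delta)
  moreover have "(\<Sum>t\<in>S. dirac (inv t) y) = (\<Sum>t\<in>S. dirac t y)"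
    by (rule sum_gens_inv)
  ultimately have "(\<Sum>t\<in>S. dir_laplacian G t y) = 2 * real (card S) * dirac \<one> y - 2 * (if y \<in> S then 1 else 0)"
    unfolding dir_laplacian_def by (simp add: sum_subtractf)
  then show ?thesis unfolding laplacian_def dirac_def by simp
qed

lemma laplacian_sos:
  assumes "R \<ge> 1"
  shows "laplacian G S \<in> sos_R G S R"
proof -
  have "(\<lambda>y. \<Sum>t\<in>S. dir_laplacian G t y) \<in> sos_R G S R"
    using assms by (intro sos_R_sum finite_gens dir_laplacian_sos gen_in_word_ball) auto
  then have "(\<lambda>y. (1/2) * (\<Sum>t\<in>S. dir_laplacian G t y)) \<in> sos_R G S R"
    by (rule sos_R_scale) simp
  then show ?thesis unfolding laplacian_eq_half_sum[symmetric] by simp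
qed

end

section \<open>Bounding Q(g) by the Laplacian\<close>

lemma count_list_no_adjacent:
  "(\<forall>p q. w \<noteq> p @ t # t # q) \<Longrightarrow> 2 * count_list w t \<le> length w + 1"
proof (induction w rule: induct_list012)
  case (3 x y zs)
  show ?case
  proof (cases "x = t")
    case True
    then have "y \<noteq> t" using "3.prems"[rule_format, of "[]" zs] by auto
    moreover have "\<forall>p q. zs \<noteq> p @ t # t # q"
      using "3.prems" by (metis append_Cons)
    ultimately show ?thesis using True "3.IH"(1) by simp
  next
    case False
    have "\<forall>p q. y # zs \<noteq> p @ t # t # q"
      using "3.prems" by (metis append_Cons)
    then show ?thesis using False "3.IH"(2) by simp
  qed
qed simp_all

lemma count_list_add_le_length: "t \<noteq> t' \<Longrightarrow> count_list w t + count_list w t' \<le> length w"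
  by (induction w) auto

lemma sum_list_map_eq_sum_count:
  assumes "finite S" "set w \<subseteq> S"
  shows "sum_list (map f w) = (\<Sum>t\<in>S. real (count_list w t) * (f t :: real))"
  using assms(2)
proof (induction w)
  case (Cons x w)
  then have xS: "x \<in> S" by simp
  have "(\<Sum>t\<in>S. real (count_list (x # w) t) * f t)
      = (\<Sum>t\<in>S. real (count_list w t) * f t + (if x = t then f t else 0))"
    by (intro sum.cong refl) (auto simp: algebra_simps)
  also have "\<dots> = (\<Sum>t\<in>S. real (count_list w t) * f t) + f x"
    using assms(1) xS by (simp add: sum.distrib)
  finally show ?case using Cons by simp
qed simp

context symmetric_generators begin

lemma short_word_dir_laplacian_sos:
  assumes "set w \<subseteq> S" "length w \<le> 1" "length w \<le> 2 * R" "c \<ge> 1"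
  shows "(\<lambda>y. c * (\<Sum>s\<leftarrow>w. dir_laplacian G s y) - dir_laplacian G (foldr (\<otimes>) w \<one>) y)
    \<in> sos_R G S R"
proof (cases w)
  case Nil
  then show ?thesis using sos_R_zero by (simp add: dir_laplacian_one)
next
  case (Cons s w')
  then have w: "w = [s]" using assms(2) by simp
  then have s: "s \<in> carrier G" "s \<in> word_ball G S (2 * R)"
    using assms gens_closed gen_in_word_ball by auto
  have "(\<lambda>y. (c - 1) * dir_laplacian G s y) \<in> sos_R G S R"
    using s(2) assms(4) by (intro sos_R_scale dir_laplacian_sos) simp_all
  then show ?thesis using w s(1) by (simp add: algebra_simps)
qed

lemma word_dir_laplacian_sos:
  assumes "set w \<subseteq> S" "length w \<le> 2 ^ d" "length w \<le> 2 * R"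
  shows "(\<lambda>y. 2 ^ d * (\<Sum>s\<leftarrow>w. dir_laplacian G s y) - dir_laplacian G (foldr (\<otimes>) w \<one>) y)
    \<in> sos_R G S R"
  using assms
proof (induction d arbitrary: w)
  case 0
  then show ?case using short_word_dir_laplacian_sos[where c = 1] by simp
next
  case (Suc d)
  show ?case
  proof (cases "length w \<le> 1")
    case True
    moreover have "(1::real) \<le> 2 ^ Suc d" by (rule one_le_power) simp
    ultimately show ?thesis using Suc.prems by (intro short_word_dir_laplacian_sos)
  next
    case False
    define u where "u = take (length w div 2) w"
    define v where "v = drop (length w div 2) w"
    let ?L = "\<lambda>xs y. 2 ^ d * (\<Sum>s\<leftarrow>xs. dir_laplacian G s y) - dir_laplacian G (foldr (\<otimes>) xs \<one>) y"
    have wuv: "w = u @ v" unfolding u_def v_def by simp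
    have su: "set u \<subseteq> S" "set v \<subseteq> S" using Suc.prems(1) wuv by auto
    have l: "length u \<le> 2 ^ d" "length v \<le> 2 ^ d" "length u \<le> R" "length v \<le> R"
      using Suc.prems(2,3) unfolding u_def v_def by auto
    let ?h = "foldr (\<otimes>) u \<one>" and ?k = "foldr (\<otimes>) v \<one>"
    have hk: "?h \<in> word_ball G S R" "?k \<in> word_ball G S R"
      unfolding word_ball_iff using su l by blast+
    have "(\<lambda>y. (2 * ?L u y + 2 * ?L v y)
        + (2 * dir_laplacian G ?h y + 2 * dir_laplacian G ?k y - dir_laplacian G (?h \<otimes> ?k) y))
        \<in> sos_R G S R"
      using Suc.IH[OF su(1) l(1)] Suc.IH[OF su(2) l(2)] l(3,4)
      by (intro sos_R_add sos_R_scale dir_laplacian_mult_defect_sos hk) auto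
    moreover have "foldr (\<otimes>) w \<one> = ?h \<otimes> ?k"
      unfolding wuv using su gens_closed by (intro foldr_mult_append) auto
    ultimately show ?thesis by (simp add: wuv algebra_simps)
  qed
qed

text \<open>A shortest word for \<open>g\<close> never repeats an involution twice in a row, so each
  involution occurs at most \<open>R\<close> times in it.\<close>

lemma word_ball_word_with_few_involutions:
  assumes "g \<in> word_ball G S (2 * R)"
  obtains w where "set w \<subseteq> S" "length w \<le> 2 * R" "foldr (\<otimes>) w \<one> = g"
    "\<forall>t\<in>S. inv t = t \<longrightarrow> count_list w t \<le> R"
proof -
  let ?P = "\<lambda>w. set w \<subseteq> S \<and> length w \<le> 2 * R \<and> foldr (\<otimes>) w \<one> = g"
  obtain w0 where "?P w0" using assms unfolding word_ball_iff by blast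
  then obtain w where P: "?P w" and min: "\<And>w'. ?P w' \<Longrightarrow> length w \<le> length w'"
    using ex_has_least_nat[of ?P w0 length] by blast
  have "count_list w t \<le> R" if t: "t \<in> S" "inv t = t" for t
  proof -
    have tc: "t \<in> carrier G" using t gens_closed by auto
    have "\<forall>p q. w \<noteq> p @ t # t # q"
    proof (intro allI notI)
      fix p q assume wpq: "w = p @ t # t # q"
      have sp: "set p \<subseteq> carrier G" "set q \<subseteq> carrier G"
        using P wpq gens_closed by auto
      have "t \<otimes> t = \<one>" using t(2) r_inv[OF tc] by simp
      then have "foldr (\<otimes>) (t # t # q) \<one> = foldr (\<otimes>) q \<one>"
        using tc foldr_mult_closed[OF sp(2) one_closed] by (simp add: m_assoc[symmetric])
      then have "?P (p @ q)"
        using P wpq foldr_mult_append[of p "t # t # q"] foldr_mult_append[OF sp] sp tc by auto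
      then show False using min[of "p @ q"] wpq by simp
    qed
    then have "2 * count_list w t \<le> length w + 1" by (rule count_list_no_adjacent)
    then show ?thesis using P by simp
  qed
  then show ?thesis using that P by blast
qed

lemma dir_laplacian_le_laplacian:
  assumes g: "g \<in> word_ball G S (2 * R)" and "R \<ge> 1" and RK: "R \<le> 2 ^ k"
  shows "(\<lambda>y. 4 * (2 ^ k) ^ 2 * laplacian G S y - dir_laplacian G g y) \<in> sos_R G S R"
proof -
  obtain w where w: "set w \<subseteq> S" "length w \<le> 2 * R" "foldr (\<otimes>) w \<one> = g"
     and cnt: "\<forall>t\<in>S. inv t = t \<longrightarrow> count_list w t \<le> R"
    using word_ball_word_with_few_involutions[OF g] by blast
  define K :: real where "K = 2 ^ k"
  define m where "m t = (real (count_list w t) + real (count_list w (inv t))) / 2" for t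
  have m_le: "m t \<le> K" if t: "t \<in> S" for t
  proof (cases "inv t = t")
    case True
    then have "count_list w t \<le> 2 ^ k" using cnt t RK by auto
    then have "real (count_list w t) \<le> K" unfolding K_def by (simp add: of_nat_mono)
    then show ?thesis unfolding m_def using True by simp
  next
    case False
    then have "count_list w t + count_list w (inv t) \<le> length w"
      by (intro count_list_add_le_length) auto
    then have "count_list w t + count_list w (inv t) \<le> 2 * 2 ^ k"
      using w(2) RK by linarith
    then have "real (count_list w t + count_list w (inv t)) \<le> real (2 * 2 ^ k)"
      by (rule of_nat_mono)
    then show ?thesis unfolding m_def K_def by simp
  qed
  have word_sum: "(\<Sum>s\<leftarrow>w. dir_laplacian G s y) = (\<Sum>t\<in>S. m t * dir_laplacian G t y)" for y
  proof -
    have "(\<Sum>t\<in>S. real (count_list w t) * dir_laplacian G t y)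
        = (\<Sum>t\<in>S. real (count_list w (inv t)) * dir_laplacian G t y)"
      using sum_gens_inv[of "\<lambda>t. real (count_list w t) * dir_laplacian G t y"] gens_closed
      by (simp add: dir_laplacian_inv subset_iff)
    moreover have "(\<Sum>t\<in>S. m t * dir_laplacian G t y)
        = ((\<Sum>t\<in>S. real (count_list w t) * dir_laplacian G t y)
          + (\<Sum>t\<in>S. real (count_list w (inv t)) * dir_laplacian G t y)) / 2"
      unfolding m_def by (simp add: sum.distrib[symmetric] sum_divide_distrib algebra_simps)
    ultimately show ?thesis
      unfolding sum_list_map_eq_sum_count[OF finite_gens w(1)] by simp
  qed
  have "length w \<le> 2 ^ Suc k" using w(2) RK by simp
  from word_dir_laplacian_sos[OF w(1) this w(2)]
  have "(\<lambda>y. 2 ^ Suc k * (\<Sum>s\<leftarrow>w. dir_laplacian G s y) - dir_laplacian G g y) \<in> sos_R G S R"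
    using w(3) by simp
  moreover have "(\<lambda>y. 2 * K * (\<Sum>t\<in>S. (K - m t) * dir_laplacian G t y)) \<in> sos_R G S R"
  proof (intro sos_R_scale sos_R_sum finite_gens)
    fix t assume "t \<in> S"
    then show "dir_laplacian G t \<in> sos_R G S R"
      using assms(2) by (intro dir_laplacian_sos gen_in_word_ball) auto
    show "0 \<le> K - m t" using m_le \<open>t \<in> S\<close> by simp
  qed (simp add: K_def)
  ultimately have "(\<lambda>y. (2 ^ Suc k * (\<Sum>s\<leftarrow>w. dir_laplacian G s y) - dir_laplacian G g y)
      + 2 * K * (\<Sum>t\<in>S. (K - m t) * dir_laplacian G t y)) \<in> sos_R G S R"
    by (rule sos_R_add)
  then show ?thesis
    unfolding word_sum laplacian_eq_half_sum K_def
    by (simp add: sum_subtractf sum_distrib_left sum_distrib_right algebra_simps power2_eq_square)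
qed

end

section \<open>Symmetric elements of the augmentation ideal\<close>

lemma augmentation_eq_sum: "finite F \<Longrightarrow> supp f \<subseteq> F \<Longrightarrow> augmentation f = sum f F"
  unfolding augmentation_def by (rule sum.mono_neutral_left) (auto simp: supp_def)

lemma sum_positive_le_half_norm1:
  assumes "finite (supp b)" "augmentation b = 0" "P \<subseteq> supp b" "\<And>g. g \<in> P \<Longrightarrow> b g > 0"
  shows "(\<Sum>g\<in>P. b g) \<le> norm1 b / 2"
proof -
  have "(\<Sum>g\<in>P. b g) = (\<Sum>g\<in>P. (\<bar>b g\<bar> + b g) / 2)"
    using assms(4) by (intro sum.cong refl) (simp add: less_imp_le)
  also have "\<dots> \<le> (\<Sum>g\<in>supp b. (\<bar>b g\<bar> + b g) / 2)"
    using assms(1,3) by (intro sum_mono2) auto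
  also have "\<dots> = norm1 b / 2"
    using assms(2) unfolding norm1_def augmentation_def
    by (simp add: sum.distrib sum_divide_distrib[symmetric])
  finally show ?thesis .
qed

context group begin

lemma sos_R_inv_symmetric:
  assumes "\<sigma> \<in> sos_R G S R" "g \<in> carrier G"
  shows "\<sigma> (inv g) = \<sigma> g"
  using assms conv_star_self_inv unfolding sos_R_def by auto

lemma symmetric_eq_sum_dir_laplacian:
  assumes b: "b \<in> grp_ring G" and b_sym: "\<And>g. g \<in> carrier G \<Longrightarrow> b (inv g) = b g"
    and b_aug: "augmentation b = 0"
  shows "(\<Sum>g\<in>supp b - {\<one>}. (- b g / 2) * dir_laplacian G g y) = b y"
proof -
  let ?A = "supp b - {\<one>}"
  have fin: "finite ?A" and Ac: "?A \<subseteq> carrier G" using b unfolding grp_ring_def by auto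
  have "inv g \<in> ?A" if "g \<in> ?A" for g
  proof -
    have "g \<in> carrier G" using that Ac by blast
    then have "b (inv g) \<noteq> 0" "inv g \<noteq> \<one>"
      using that b_sym[of g] by (auto simp: supp_def)
    then show ?thesis by (simp add: supp_def)
  qed
  then have "(\<Sum>g\<in>?A. b (inv g) * dirac (inv g) y) = (\<Sum>g\<in>?A. b g * dirac g y)"
    using Ac by (rule sum_inv_reindex)
  then have "(\<Sum>g\<in>?A. b g * dirac (inv g) y) = (\<Sum>g\<in>?A. b g * dirac g y)"
    using Ac b_sym by (simp add: subset_iff)
  moreover have "(\<Sum>g\<in>?A. b g * dirac g y) = (if y \<in> ?A then b y else 0)"
    using fin by (simp add: dirac_def sum.delta' if_distrib cong: if_cong)
  moreover have "(\<Sum>g\<in>?A. b g) = - b \<one>"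
    using b_aug b unfolding augmentation_def grp_ring_def by (simp add: sum_diff1 supp_def)
  moreover have "(\<Sum>g\<in>?A. (- b g / 2) * dir_laplacian G g y) =
      - (\<Sum>g\<in>?A. b g) * dirac \<one> y + (1/2) * (\<Sum>g\<in>?A. b g * dirac g y)
      + (1/2) * (\<Sum>g\<in>?A. b g * dirac (inv g) y)"
    unfolding dir_laplacian_def
    by (simp add: sum_distrib_left sum_distrib_right sum.distrib sum_subtractf algebra_simps)
  ultimately show ?thesis by (auto simp: dirac_def supp_def)
qed

end

context symmetric_generators begin

lemma plus_laplacian_sos:
  assumes b: "b \<in> grp_ring G" "supp b \<subseteq> word_ball G S (2 * R)"
    and b_sym: "\<And>g. g \<in> carrier G \<Longrightarrow> b (inv g) = b g" and b_aug: "augmentation b = 0"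
    and "R \<ge> 1" and RK: "R \<le> 2 ^ k" and \<epsilon>: "\<epsilon> \<ge> (2 ^ k) ^ 2 * norm1 b"
  shows "(\<lambda>y. b y + \<epsilon> * laplacian G S y) \<in> sos_R G S R"
proof -
  define C :: real where "C = 4 * (2 ^ k) ^ 2"
  let ?A = "supp b - {\<one>}"
  define Pos where "Pos = {g \<in> ?A. 0 < b g}"
  define Neg where "Neg = {g \<in> ?A. b g < 0}"
  define P where "P = (\<Sum>g\<in>Pos. b g)"
  have fin: "finite (supp b)" using b unfolding grp_ring_def by auto
  then have fin_PN: "finite Pos" "finite Neg" unfolding Pos_def Neg_def by auto
  have PN: "?A = Pos \<union> Neg" "Pos \<inter> Neg = {}" unfolding Pos_def Neg_def supp_def by auto
  have "P \<le> norm1 b / 2"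
    unfolding P_def using fin b_aug by (rule sum_positive_le_half_norm1) (auto simp: Pos_def)
  then have "C * P / 2 \<le> (2 ^ k) ^ 2 * norm1 b"
    unfolding C_def by (simp add: mult_left_mono)
  then have "C * P / 2 \<le> \<epsilon>" using \<epsilon> by simp
  \<comment> \<open>Terms with b(g) < 0 are squares; each one with b(g) > 0 borrows (b(g)/2) C \<Delta>.\<close>
  then have "(\<lambda>y. (\<Sum>g\<in>Neg. (- b g / 2) * dir_laplacian G g y)
      + (\<Sum>g\<in>Pos. (b g / 2) * (C * laplacian G S y - dir_laplacian G g y))
      + (\<epsilon> - C * P / 2) * laplacian G S y) \<in> sos_R G S R"
    using b(2) RK \<open>R \<ge> 1\<close> unfolding Pos_def Neg_def C_def
    by (intro sos_R_add sos_R_sum sos_R_scale dir_laplacian_sos dir_laplacian_le_laplacian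
        laplacian_sos fin_PN[unfolded Pos_def Neg_def]) auto
  moreover have "(\<Sum>g\<in>Neg. (- b g / 2) * dir_laplacian G g y)
      + (\<Sum>g\<in>Pos. (b g / 2) * (C * laplacian G S y - dir_laplacian G g y))
      + (\<epsilon> - C * P / 2) * laplacian G S y = b y + \<epsilon> * laplacian G S y" for y
  proof -
    have "(\<Sum>g\<in>Pos. (b g / 2) * (C * laplacian G S y - dir_laplacian G g y)) =
        C * P / 2 * laplacian G S y + (\<Sum>g\<in>Pos. (- b g / 2) * dir_laplacian G g y)"
      unfolding P_def
      by (simp add: sum_distrib_left sum_distrib_right sum_subtractf sum_negf algebra_simps sum_divide_distrib)
    moreover have "b y = (\<Sum>g\<in>Pos. (- b g / 2) * dir_laplacian G g y)
        + (\<Sum>g\<in>Neg. (- b g / 2) * dir_laplacian G g y)"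
      using symmetric_eq_sum_dir_laplacian[OF b(1) b_sym b_aug, of y]
        sum.union_disjoint[OF fin_PN PN(2), of "\<lambda>g. (- b g / 2) * dir_laplacian G g y"] PN(1)
      by simp
    ultimately show ?thesis by (simp add: algebra_simps)
  qed
  ultimately show ?thesis by simp
qed

end

lemma (in group) plus_laplacian_in_aug_ideal:
  assumes "x \<in> aug_ideal G" "finite S" "S \<subseteq> carrier G"
  shows "(\<lambda>g. x g + \<epsilon> * laplacian G S g) \<in> aug_ideal G"
proof -
  define F where "F = supp x \<union> insert \<one> S"
  have F: "finite F" "F \<subseteq> carrier G"
    using assms unfolding F_def aug_ideal_def grp_ring_def by auto
  have supp_F: "supp (\<lambda>g. x g + \<epsilon> * laplacian G S g) \<subseteq> F"
    unfolding F_def supp_def laplacian_def by auto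
  have "(\<Sum>g\<in>F. if g \<in> S then 1 else 0) = (\<Sum>g\<in>S. 1 :: real)"
    using F(1) by (intro sum.mono_neutral_cong_right) (auto simp: F_def)
  then have "(\<Sum>g\<in>F. laplacian G S g) = 0"
    using F(1) unfolding laplacian_def by (simp add: sum_subtractf sum.delta F_def)
  moreover have "augmentation x = sum x F"
    by (rule augmentation_eq_sum[OF F(1)]) (auto simp: F_def)
  ultimately have "augmentation (\<lambda>g. x g + \<epsilon> * laplacian G S g) = augmentation x"
    using augmentation_eq_sum[OF F(1) supp_F] by (simp add: sum.distrib sum_distrib_left[symmetric])
  moreover have "(\<lambda>g. x g + \<epsilon> * laplacian G S g) \<in> grp_ring G"
    using supp_F F unfolding grp_ring_def by (auto intro: finite_subset)
  ultimately show ?thesis using assms(1) unfolding aug_ideal_def by simp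
qed

lemma ceiling_log2_pow_bounds:
  fixes R :: nat
  assumes "R \<ge> 1"
  defines "k \<equiv> nat \<lceil>log 2 (real R)\<rceil>"
  shows "R \<le> 2 ^ k" and "(2::real) powr (2 * of_int \<lceil>log 2 (real R)\<rceil>) = (2 ^ k) ^ 2"
proof -
  have k: "(of_int \<lceil>log 2 (real R)\<rceil> :: real) = real k"
    unfolding k_def using assms by simp
  have "real R = 2 powr (log 2 (real R))" using assms by simp
  also have "\<dots> \<le> 2 powr (real k)" unfolding k[symmetric] by (intro powr_mono) auto
  also have "\<dots> = 2 ^ k" by (simp add: powr_realpow)
  finally show "R \<le> 2 ^ k" by simp
  have "(2::real) powr (2 * of_int \<lceil>log 2 (real R)\<rceil>) = 2 powr (real (2 * k))"
    unfolding k by simp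
  also have "\<dots> = 2 ^ (2 * k)" by (rule powr_realpow) simp
  finally show "(2::real) powr (2 * of_int \<lceil>log 2 (real R)\<rceil>) = (2 ^ k) ^ 2"
    by (simp add: power_mult[symmetric] mult.commute)
qed

theorem lemma4p10:
  fixes G :: "('a, 'b) monoid_scheme" and S :: "'a set" and R :: nat
    and x b :: "'a \<Rightarrow> real" and \<epsilon> :: real
  assumes "group G"
    and "finite S" and "S \<subseteq> carrier G" and "\<forall>s\<in>S. inv\<^bsub>G\<^esub> s \<in> S"
    and "generate G S = carrier G"
    and "R \<ge> 1"
    and "x \<in> aug_ideal G" and "star G x = x"
    and "b \<in> grp_ring G" and "supp b \<subseteq> word_ball G S (2 * R)"
    and "(\<lambda>g. x g - b g) \<in> sos_R_IG G S R"
    and "\<epsilon> \<ge> 2 powr (2 * of_int \<lceil>log 2 (real R)\<rceil>) * norm1 b"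
  shows "(\<lambda>g. x g + \<epsilon> * laplacian G S g) \<in> sos_R_IG G S R"
proof -
  interpret symmetric_generators G S
    by (intro symmetric_generators.intro assms(1) symmetric_generators_axioms.intro)
      (use assms in auto)
  define \<sigma> where "\<sigma> = (\<lambda>g. x g - b g)"
  have \<sigma>: "\<sigma> \<in> sos_R G S R" "\<sigma> \<in> aug_ideal G"
    using assms(11) unfolding \<sigma>_def sos_R_IG_def by auto
  have b_sym: "b (inv\<^bsub>G\<^esub> g) = b g" if "g \<in> carrier G" for g
    using sos_R_inv_symmetric[OF \<sigma>(1) that] fun_cong[OF assms(8), of g] that
    unfolding \<sigma>_def star_def by simp
  define F where "F = supp x \<union> supp b"
  have F: "finite F" "supp \<sigma> \<subseteq> F" "supp x \<subseteq> F" "supp b \<subseteq> F"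
    using assms(7,9) unfolding F_def \<sigma>_def supp_def aug_ideal_def grp_ring_def by auto
  have "augmentation b = 0"
    using \<sigma>(2) assms(7) augmentation_eq_sum[OF F(1)] F(2-4)
    unfolding aug_ideal_def \<sigma>_def by (simp add: sum_subtractf)
  moreover define k where "k = nat \<lceil>log 2 (real R)\<rceil>"
  then have "R \<le> 2 ^ k" "\<epsilon> \<ge> (2 ^ k) ^ 2 * norm1 b"
    using ceiling_log2_pow_bounds[OF assms(6)] assms(12) by simp_all
  ultimately have "(\<lambda>y. b y + \<epsilon> * laplacian G S y) \<in> sos_R G S R"
    using assms(6,9,10) b_sym by (intro plus_laplacian_sos)
  then have "(\<lambda>y. \<sigma> y + (b y + \<epsilon> * laplacian G S y)) \<in> sos_R G S R"
    by (rule sos_R_add[OF \<sigma>(1)])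
  moreover have "(\<lambda>g. x g + \<epsilon> * laplacian G S g) \<in> aug_ideal G"
    using assms(7,2,3) by (rule plus_laplacian_in_aug_ideal)
  ultimately show ?thesis unfolding sos_R_IG_def \<sigma>_def by simp
qed

end
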